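(* Let $f_{X,Z}$ be a Gaussian latent machine, i.e. $f_{X,Z}(x,z)\propto\prod_{i=1}^m\mathcal{N}\big((Kx)_i;\mu_i(z_i),\sigma_i^2(z_i)\big)\,f_i(z_i)$ with $K\in\mathbb{R}^{m\times n}$, $m\ge n$, of full column rank. Then the marginal density $f_X$ of $X$ is a Gaussian mixture on $\mathbb{R}^n$ of the form $f_X(x)=\int_{\mathcal{Z}}f_Z(z)\cdot\mathcal{N}\big(x;\mu(z),\Sigma(z)\big)\,\mathrm{d}z$, where $f_Z$ is the marginal density of $Z$, $\Sigma(z):=\big(K^\top\Sigma_0^{-1}(z)K\big)^{-1}$ and $\mu(z):=\Sigma(z)K^\top\Sigma_0^{-1}(z)\mu_0(z)$.
   Context: A Gaussian latent machine: $X\in\mathbb{R}^n$, $Z=(Z_1,\dots,Z_m)\in\mathcal{Z}=\mathcal{Z}_1\times\cdots\times\mathcal{Z}_m$, $f_i$ univariate densities on $\mathcal{Z}_i$, $\mu_i:\mathcal{Z}_i\to\mathbb{R}$, $\sigma_i^2:\mathcal{Z}_i\to(0,\infty)$, and $\mathcal{N}(\cdot;\mu,\Sigma)$ the (multivariate) normal density. $\mu_0(z):=(\mu_1(z_1),\dots,\mu_m(z_m))$, $\Sigma_0(z):=\operatorname{diag}(\sigma_1^2(z_1),\dots,\sigma_m^2(z_m))$. *)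

theory Defs
  imports "HOL-Analysis.Analysis" "HOL-Probability.Probability"
begin

definition mvn_density :: "real^'n \<Rightarrow> real^'n^'n \<Rightarrow> real^'n \<Rightarrow> real" where
  "mvn_density mu S x =
     exp (- ((x - mu) \<bullet> (matrix_inv S *v (x - mu))) / 2)
     / sqrt ((2 * pi) ^ CARD('n) * det S)"

definition glm_mu0 :: "('m \<Rightarrow> 'z \<Rightarrow> real) \<Rightarrow> ('m \<Rightarrow> 'z) \<Rightarrow> real^'m" where
  "glm_mu0 mu z = (\<chi> i. mu i (z i))"

definition glm_Sigma0 :: "('m \<Rightarrow> 'z \<Rightarrow> real) \<Rightarrow> ('m \<Rightarrow> 'z) \<Rightarrow> real^'m^'m" where
  "glm_Sigma0 s2 z = (\<chi> i j. if i = j then s2 i (z i) else 0)"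

definition glm_Sigma :: "real^'n^'m \<Rightarrow> ('m \<Rightarrow> 'z \<Rightarrow> real) \<Rightarrow> ('m \<Rightarrow> 'z) \<Rightarrow> real^'n^'n" where
  "glm_Sigma K s2 z = matrix_inv (transpose K ** matrix_inv (glm_Sigma0 s2 z) ** K)"

definition glm_mu :: "real^'n^'m \<Rightarrow> ('m \<Rightarrow> 'z \<Rightarrow> real) \<Rightarrow> ('m \<Rightarrow> 'z \<Rightarrow> real)
    \<Rightarrow> ('m \<Rightarrow> 'z) \<Rightarrow> real^'n" where
  "glm_mu K mu s2 z = glm_Sigma K s2 z *v (transpose K *v (matrix_inv (glm_Sigma0 s2 z) *v glm_mu0 mu z))"

text \<open>Unnormalised joint density prod_i N((Kx)_i; mu_i(z_i), sigma_i^2(z_i)) f_i(z_i).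
  normal_density takes the standard deviation, hence the sqrt.\<close>
definition glm_unnorm :: "real^'n^'m \<Rightarrow> ('m \<Rightarrow> 'z \<Rightarrow> real) \<Rightarrow> ('m \<Rightarrow> 'z \<Rightarrow> real)
    \<Rightarrow> ('m \<Rightarrow> 'z \<Rightarrow> real) \<Rightarrow> real^'n \<Rightarrow> ('m \<Rightarrow> 'z) \<Rightarrow> real" where
  "glm_unnorm K mu s2 f x z =
     (\<Prod>i\<in>UNIV. normal_density (mu i (z i)) (sqrt (s2 i (z i))) ((K *v x) $ i) * f i (z i))"

definition glm_const :: "('m \<Rightarrow> 'z measure) \<Rightarrow> real^'n^'m \<Rightarrow> ('m \<Rightarrow> 'z \<Rightarrow> real)
    \<Rightarrow> ('m \<Rightarrow> 'z \<Rightarrow> real) \<Rightarrow> ('m \<Rightarrow> 'z \<Rightarrow> real) \<Rightarrow> ennreal" where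
  "glm_const M K mu s2 f =
     (\<integral>\<^sup>+ x. (\<integral>\<^sup>+ z. ennreal (glm_unnorm K mu s2 f x z) \<partial>(PiM UNIV M)) \<partial>lborel)"

definition glm_joint :: "('m \<Rightarrow> 'z measure) \<Rightarrow> real^'n^'m \<Rightarrow> ('m \<Rightarrow> 'z \<Rightarrow> real)
    \<Rightarrow> ('m \<Rightarrow> 'z \<Rightarrow> real) \<Rightarrow> ('m \<Rightarrow> 'z \<Rightarrow> real) \<Rightarrow> real^'n \<Rightarrow> ('m \<Rightarrow> 'z) \<Rightarrow> real" where
  "glm_joint M K mu s2 f x z = glm_unnorm K mu s2 f x z / enn2real (glm_const M K mu s2 f)"

definition glm_marg_X :: "('m \<Rightarrow> 'z measure) \<Rightarrow> real^'n^'m \<Rightarrow> ('m \<Rightarrow> 'z \<Rightarrow> real)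
    \<Rightarrow> ('m \<Rightarrow> 'z \<Rightarrow> real) \<Rightarrow> ('m \<Rightarrow> 'z \<Rightarrow> real) \<Rightarrow> real^'n \<Rightarrow> ennreal" where
  "glm_marg_X M K mu s2 f x = (\<integral>\<^sup>+ z. ennreal (glm_joint M K mu s2 f x z) \<partial>(PiM UNIV M))"

definition glm_marg_Z :: "('m \<Rightarrow> 'z measure) \<Rightarrow> real^'n^'m \<Rightarrow> ('m \<Rightarrow> 'z \<Rightarrow> real)
    \<Rightarrow> ('m \<Rightarrow> 'z \<Rightarrow> real) \<Rightarrow> ('m \<Rightarrow> 'z \<Rightarrow> real) \<Rightarrow> ('m \<Rightarrow> 'z) \<Rightarrow> ennreal" where
  "glm_marg_Z M K mu s2 f z = (\<integral>\<^sup>+ x. ennreal (glm_joint M K mu s2 f x z) \<partial>lborel)"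

end

theory Submission
  imports Defs
begin

(* For fixed z, the x-dependence of the joint density is exp (-|B x - w|^2 / 2) with the whitened
   data B = Sigma_0(z)^(-1/2) K and w = Sigma_0(z)^(-1/2) mu_0(z).  Completing the square around the
   least-squares solution mu(z) = (B^T B)^(-1) B^T w = Sigma(z) K^T Sigma_0(z)^(-1) mu_0(z) splits off
   an x-independent factor, and what remains is the normal density N(x; mu(z), Sigma(z)) times its
   integral over x.  Hence f_{X,Z}(x, z) = f_Z(z) N(x; mu(z), Sigma(z)) pointwise, and integrating
   over z gives the mixture.  The Gaussian integral of exp (-|B x|^2 / 2) is computed by replacing B
   with a square matrix A satisfying |A x| = |B x| and changing variables linearly. *)

section \<open>Lebesgue measure under linear maps\<close>

lemma measure_shear_cbox:
  fixes a b :: "real^'n::finite"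
  assumes "m \<noteq> n"
  shows "measure lebesgue ((\<lambda>x. \<chi> i. if i = m then x$m + x$n else x$i) ` cbox a b)
       = measure lebesgue (cbox a b)"
proof (cases "cbox a b = {}")
  case False
  let ?h = "\<lambda>x::real^'n. \<chi> i. if i = m then x$m + x$n else x$i"
  \<comment> \<open>measure_shear_interval needs a nonnegative lower bound in coordinate n\<close>
  define v :: "real^'n" where "v = axis n (a$n)"
  have h_add: "?h (x + y) = ?h x + ?h y" for x y
    by (simp add: vec_eq_iff)
  have cbox_eq: "cbox a b = (+) v ` cbox (a - v) (b - v)"
    using cbox_translation[of v "a - v" "b - v"] by simp
  have "measure lebesgue (?h ` cbox a b) = measure lebesgue ((+) (?h v) ` ?h ` cbox (a - v) (b - v))"
    unfolding cbox_eq image_image h_add by (simp add: image_image)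
  also have "\<dots> = measure lebesgue (?h ` cbox (a - v) (b - v))"
    by (rule measure_translation)
  also have "\<dots> = measure lebesgue (cbox (a - v) (b - v))"
    using assms False by (intro measure_shear_interval) (auto simp: v_def cbox_eq)
  also have "\<dots> = measure lebesgue (cbox a b)"
    unfolding cbox_eq by (rule measure_translation[symmetric])
  finally show ?thesis .
qed simp

lemma measure_swap_cbox:
  fixes a b :: "real^'n::finite"
  shows "measure lebesgue ((\<lambda>x. \<chi> i. x $ Transposition.transpose m n i) ` cbox a b)
       = measure lebesgue (cbox a b)"
proof (cases "cbox a b = {}")
  case False
  let ?h = "\<lambda>x::real^'n. \<chi> i. x $ Transposition.transpose m n i"
  have image_eq: "?h ` cbox a b = cbox (?h a) (?h b)"
    by (auto simp: image_iff lambda_swap_Galois mem_box_cart) (metis transpose_involutory)+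
  moreover have "cbox (?h a) (?h b) \<noteq> {}"
    using False image_eq by auto
  moreover have "(\<Prod>i\<in>UNIV. (?h b - ?h a) $ i) = (\<Prod>i\<in>UNIV. (b - a) $ i)"
    using prod.permute [OF permutes_swap_id, where S=UNIV and g="\<lambda>i. (b - a) $ i", symmetric]
    by (simp add: o_def)
  ultimately show ?thesis
    using False by (simp add: content_cbox_cart)
qed simp

(* The library's measure_linear_image asks for a well-ordered index type, but only to compute the
   determinant of a shear; det_row_operation does that without an order. *)
proposition
  fixes f :: "real^'n::finite \<Rightarrow> real^'n"
  assumes "linear f" "S \<in> lmeasurable"
  shows lmeasurable_linear_image_cart: "f ` S \<in> lmeasurable"
    and measure_linear_image_cart: "measure lebesgue (f ` S) = \<bar>det (matrix f)\<bar> * measure lebesgue S"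
proof -
  let ?P = "\<lambda>f. \<forall>S \<in> lmeasurable. f ` S \<in> lmeasurable \<and>
              measure lebesgue (f ` S) = \<bar>det (matrix f)\<bar> * measure lebesgue S"
  have volume_preserving: "?P h"
    if lin: "linear h" and det: "\<bar>det (matrix h)\<bar> = 1"
      and cbox: "\<And>a b. measure lebesgue (h ` cbox a b) = measure lebesgue (cbox a b)"
    for h :: "real^'n \<Rightarrow> real^'n"
  proof
    fix S :: "(real^'n) set"
    assume "S \<in> lmeasurable"
    then have "h ` S \<in> lmeasurable \<and> 1 * measure lebesgue S = measure lebesgue (h ` S)"
      by (rule measure_linear_sufficient[OF lin]) (simp add: cbox)
    then show "h ` S \<in> lmeasurable \<and>
        measure lebesgue (h ` S) = \<bar>det (matrix h)\<bar> * measure lebesgue S"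
      using det by simp
  qed
  have "?P f"
    using \<open>linear f\<close>
  proof (induction f rule: induct_linear_elementary[consumes 1, case_names comp zeroes stretch swap shear])
    case (comp f g)
    show ?case
    proof
      fix S :: "(real^'n) set"
      assume "S \<in> lmeasurable"
      then have gS: "g ` S \<in> lmeasurable"
          "measure lebesgue (g ` S) = \<bar>det (matrix g)\<bar> * measure lebesgue S"
        using comp.IH(2) by auto
      then have "f ` g ` S \<in> lmeasurable"
          "measure lebesgue (f ` g ` S) = \<bar>det (matrix f)\<bar> * measure lebesgue (g ` S)"
        using comp.IH(1) by auto
      then show "(f \<circ> g) ` S \<in> lmeasurable \<and>
          measure lebesgue ((f \<circ> g) ` S) = \<bar>det (matrix (f \<circ> g))\<bar> * measure lebesgue S"
        unfolding image_comp [symmetric] matrix_compose[OF comp.hyps(2,1)] det_mul abs_mult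
        using gS(2) by simp
    qed
  next
    case (zeroes f i)
    then have "\<not> inj f"
      by (metis linear_injective_imp_surjective one_neq_zero surjE vec_component)
    then have "det (matrix f) = 0" "negligible (f ` S)" for S
      using zeroes.hyps(1) det_nz_iff_inj negligible_linear_singular_image by blast+
    then show ?case
      by (simp add: negligible_iff_measure)
  next
    case (stretch c)
    show ?case
      by (simp add: measurable_stretch measure_stretch axis_def matrix_def det_diagonal)
  next
    case (swap m n)
    let ?h = "\<lambda>x::real^'n. \<chi> i. x $ Transposition.transpose m n i"
    have "matrix ?h = transpose (\<chi> i j. mat 1 $ i $ Transposition.transpose m n j)"
      by (simp add: vec_eq_iff matrix_def transpose_def mat_def axis_def eq_commute)
    then have "\<bar>det (matrix ?h)\<bar> = 1"
      by (simp add: det_permute_columns permutes_swap_id sign_swap_id abs_mult)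
    then show ?case
      by (intro volume_preserving linearI measure_swap_cbox) (simp_all add: vec_eq_iff)
  next
    case (shear m n)
    let ?h = "\<lambda>x::real^'n. \<chi> i. if i = m then x$m + x$n else x$i"
    have "matrix ?h = (\<chi> k. if k = m then row m (mat 1) + 1 *s row n (mat 1) else row k (mat 1))"
      by (auto simp: vec_eq_iff matrix_def row_def mat_def axis_def)
    then have "\<bar>det (matrix ?h)\<bar> = 1"
      using det_row_operation[OF shear, of "mat 1 :: real^'n^'n" 1] by simp
    then show ?case
      using shear
      by (intro volume_preserving linearI measure_shear_cbox) (auto simp: vec_eq_iff algebra_simps)
  qed
  with assms show "f ` S \<in> lmeasurable"
    and "measure lebesgue (f ` S) = \<bar>det (matrix f)\<bar> * measure lebesgue S"
    by blast+
qed

lemma borel_measurable_linear: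
  fixes f :: "'a::euclidean_space \<Rightarrow> 'b::euclidean_space"
  shows "linear f \<Longrightarrow> f \<in> borel_measurable borel"
  by (intro borel_measurable_continuous_onI linear_continuous_on) (simp add: linear_conv_bounded_linear)

lemma lborel_eq_density_distr_linear:
  fixes f :: "real^'n::finite \<Rightarrow> real^'n"
  assumes lin: "linear f" and "inj f"
  shows "lborel = density (distr lborel borel f) (\<lambda>_. ennreal \<bar>det (matrix f)\<bar>)"
proof (rule lborel_eqI)
  fix l u :: "real^'n"
  assume le: "\<And>b. b \<in> Basis \<Longrightarrow> l \<bullet> b \<le> u \<bullet> b"
  obtain g where g: "linear g" "\<And>x. g (f x) = x" "\<And>x. f (g x) = x"
    using linear_injective_isomorphism[OF lin \<open>inj f\<close>] by metis
  have "f \<circ> g = id"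
    using g(3) by auto
  then have "matrix f ** matrix g = mat 1"
    by (metis matrix_compose[OF g(1) lin] matrix_id_mat_1)
  then have det_fg: "\<bar>det (matrix f)\<bar> * \<bar>det (matrix g)\<bar> = 1"
    by (metis abs_1 abs_mult det_I det_mul)
  have f_borel: "f \<in> borel_measurable borel"
    using lin by (rule borel_measurable_linear)
  have preimage: "f -` box l u = g ` box l u"
  proof
    show "f -` box l u \<subseteq> g ` box l u"
      using g(2) by (metis image_eqI subsetI vimageE)
    show "g ` box l u \<subseteq> f -` box l u"
      using g(3) by auto
  qed
  have "f -` box l u \<in> sets borel"
    using f_borel by (simp add: measurable_sets_borel)
  then have "emeasure lborel (f -` box l u) = emeasure lebesgue (g ` box l u)"
    by (simp add: preimage)
  also have "\<dots> = ennreal (\<bar>det (matrix g)\<bar> * measure lebesgue (box l u))"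
    using lmeasurable_linear_image_cart[OF g(1) lmeasurable_box]
      measure_linear_image_cart[OF g(1) lmeasurable_box]
    by (simp add: emeasure_eq_measure2)
  finally have "emeasure (density (distr lborel borel f) (\<lambda>_. ennreal \<bar>det (matrix f)\<bar>)) (box l u)
      = ennreal (\<bar>det (matrix f)\<bar> * \<bar>det (matrix g)\<bar> * measure lebesgue (box l u))"
    using f_borel by (simp add: emeasure_density_const emeasure_distr ennreal_mult mult.assoc)
  also have "\<dots> = emeasure lborel (box l u)"
    by (simp add: det_fg emeasure_eq_measure2)
  finally show "emeasure (density (distr lborel borel f) (\<lambda>_. ennreal \<bar>det (matrix f)\<bar>)) (box l u)
      = (\<Prod>b\<in>Basis. (u - l) \<bullet> b)"
    using le by (simp add: emeasure_lborel_box_eq)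
qed simp

lemma nn_integral_change_of_variables_linear_cart:
  fixes f :: "real^'n::finite \<Rightarrow> real^'n" and g :: "real^'n \<Rightarrow> ennreal"
  assumes lin: "linear f" and "inj f" and g: "g \<in> borel_measurable borel"
  shows "(\<integral>\<^sup>+x. g (f x) \<partial>lborel) * ennreal \<bar>det (matrix f)\<bar>
       = (\<integral>\<^sup>+x. g x \<partial>lborel)"
proof -
  have f_borel: "f \<in> borel_measurable borel"
    using lin by (rule borel_measurable_linear)
  have "(\<integral>\<^sup>+x. g x \<partial>lborel)
      = (\<integral>\<^sup>+x. g x \<partial>density (distr lborel borel f) (\<lambda>_. ennreal \<bar>det (matrix f)\<bar>))"
    by (subst lborel_eq_density_distr_linear[OF assms(1,2)]) simp
  also have "\<dots> = (\<integral>\<^sup>+x. g (f x) * ennreal \<bar>det (matrix f)\<bar> \<partial>lborel)"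
    using g f_borel by (simp add: nn_integral_density nn_integral_distr mult.commute)
  also have "\<dots> = (\<integral>\<^sup>+x. g (f x) \<partial>lborel) * ennreal \<bar>det (matrix f)\<bar>"
    using g f_borel by (simp add: nn_integral_multc)
  finally show ?thesis ..
qed

section \<open>Matrix inverses and Gram matrices\<close>

lemma inner_matrix_vector_mult_transpose:
  fixes M :: "real^'n::finite^'m::finite"
  shows "(M *v u) \<bullet> v = u \<bullet> (transpose M *v v)"
  by (metis dot_lmul_matrix inner_commute vector_transpose_matrix)

lemma matrix_inv_unique:
  fixes A :: "'a::semiring_1^'n::finite^'m::finite"
  assumes "A ** B = mat 1" "B ** A = mat 1"
  shows "matrix_inv A = B"
proof -
  have inv: "A ** matrix_inv A = mat 1 \<and> matrix_inv A ** A = mat 1"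
    unfolding matrix_inv_def by (rule someI[of _ B]) (use assms in simp)
  have "matrix_inv A = (B ** A) ** matrix_inv A"
    using assms(2) by simp
  also have "\<dots> = B"
    using inv by (simp flip: matrix_mul_assoc)
  finally show ?thesis .
qed

lemma
  fixes A :: "'a::semiring_1^'n::finite^'m::finite"
  assumes "invertible A"
  shows matrix_inv_right: "A ** matrix_inv A = mat 1"
    and matrix_inv_left: "matrix_inv A ** A = mat 1"
  using someI_ex[OF assms[unfolded invertible_def]] by (simp_all add: matrix_inv_def)

lemma matrix_inv_matrix_inv:
  fixes A :: "'a::semiring_1^'n::finite^'m::finite"
  assumes "invertible A"
  shows "matrix_inv (matrix_inv A) = A"
  by (intro matrix_inv_unique matrix_inv_left matrix_inv_right assms)

lemma det_matrix_inv:
  fixes A :: "'a::field^'n::finite^'n"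
  assumes "invertible A"
  shows "det (matrix_inv A) = inverse (det A)"
  using det_mul[of A "matrix_inv A"] matrix_inv_right[OF assms] invertible_det_nz[of A] assms
  by (simp add: field_simps)

lemma matrix_inv_diagonal:
  fixes d :: "'n::finite \<Rightarrow> 'a::field"
  assumes "\<And>i. d i \<noteq> 0"
  shows "matrix_inv (\<chi> i j. if i = j then d i else 0) = (\<chi> i j. if i = j then inverse (d i) else 0)"
  by (rule matrix_inv_unique)
    (simp_all add: assms vec_eq_iff matrix_matrix_mult_def mat_def if_distrib[of "\<lambda>a. _ * a"]
      cong: if_cong)

lemma gram_eq_if_norms_eq:
  fixes A :: "real^'n::finite^'k::finite" and B :: "real^'n^'m::finite"
  assumes "\<And>x. norm (A *v x) = norm (B *v x)"
  shows "transpose A ** A = transpose B ** B"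
proof -
  have polar: "(M *v u) \<bullet> (M *v v)
      = ((norm (M *v (u + v)))\<^sup>2 - (norm (M *v u))\<^sup>2 - (norm (M *v v))\<^sup>2) / 2"
    for M :: "real^'n^'l::finite" and u v
    by (simp add: dot_norm matrix_vector_right_distrib)
  have "(A *v u) \<bullet> (A *v v) = (B *v u) \<bullet> (B *v v)" for u v
    by (simp only: polar assms)
  then show ?thesis
    by (simp add: matrix_mult_transpose_dot_column matrix_vector_mult_basis[symmetric])
qed

lemma gram_matrix_square_factor:
  fixes B :: "real^'n::finite^'m::finite"
  assumes inj: "inj ((*v) B)"
  obtains A :: "real^'n^'n"
  where "det A \<noteq> 0" "\<And>x. norm (A *v x) = norm (B *v x)" "transpose A ** A = transpose B ** B"
proof -
  have "subspace (range ((*v) B))"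
    by (rule linear_subspace_image) (simp_all add: subspace_UNIV)
  moreover have "dim (range ((*v) B)) = dim (UNIV :: (real^'n) set)"
    using inj full_rank_injective[of B] by (simp add: rank_dim_range)
  ultimately obtain h :: "real^'m \<Rightarrow> real^'n"
    where h: "linear h" "\<And>y. y \<in> range ((*v) B) \<Longrightarrow> norm (h y) = norm y"
    using isometries_subspaces[OF _ subspace_UNIV] by metis
  define A where "A = matrix (h \<circ> (*v) B)"
  have A_norm: "norm (A *v x) = norm (B *v x)" for x
    using h unfolding A_def by (simp add: matrix_works linear_compose)
  have "inj ((*v) A)"
  proof (rule injI)
    fix x y
    assume "A *v x = A *v y"
    then have "norm (B *v (x - y)) = 0"
      using A_norm[of "x - y"] by (simp add: matrix_vector_mult_diff_distrib)
    then show "x = y"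
      using inj by (simp add: matrix_vector_mult_diff_distrib inj_eq)
  qed
  then have "det A \<noteq> 0"
    using det_nz_iff_inj[of "(*v) A"] by (simp add: matrix_of_matrix_vector_mul)
  then show thesis
    using that A_norm gram_eq_if_norms_eq[OF A_norm] by blast
qed

lemma det_gram_pos:
  fixes B :: "real^'n::finite^'m::finite"
  assumes "inj ((*v) B)"
  shows "0 < det (transpose B ** B)"
proof -
  obtain A :: "real^'n^'n" where "det A \<noteq> 0" "transpose A ** A = transpose B ** B"
    using gram_matrix_square_factor[OF assms] by metis
  then show ?thesis
    by (metis det_mul det_transpose not_real_square_gt_zero)
qed

lemma norm_sq_least_squares_decomp:
  fixes B :: "real^'n::finite^'m::finite" and w :: "real^'m"
  assumes "invertible (transpose B ** B)"
  defines "m \<equiv> matrix_inv (transpose B ** B) *v (transpose B *v w)"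
  shows "(norm (B *v x - w))\<^sup>2 = (norm (B *v (x - m)))\<^sup>2 + (norm (B *v m - w))\<^sup>2"
proof -
  have "(transpose B ** B) *v m = transpose B *v w"
    unfolding m_def matrix_vector_mul_assoc matrix_mul_assoc matrix_inv_right[OF assms(1)] matrix_mul_lid ..
  then have normal_eq: "transpose B *v (B *v m - w) = 0"
    by (simp only: matrix_vector_mult_diff_distrib matrix_vector_mul_assoc diff_self)
  have "orthogonal (B *v (x - m)) (B *v m - w)"
    unfolding orthogonal_def inner_matrix_vector_mult_transpose normal_eq by (rule inner_zero_right)
  moreover have "B *v x - w = B *v (x - m) + (B *v m - w)"
    by (simp add: matrix_vector_mult_diff_distrib)
  ultimately show ?thesis
    by (metis norm_add_Pythagorean)
qed

section \<open>Gaussian integrals\<close>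

lemma nn_integral_exp_neg_sq_half:
  "(\<integral>\<^sup>+t. ennreal (exp (- (t\<^sup>2 / 2))) \<partial>lborel) = ennreal (sqrt (2 * pi))"
proof -
  have "(\<lambda>t. ennreal (exp (- (t\<^sup>2 / 2))))
      = (\<lambda>t. ennreal (sqrt (2 * pi)) * ennreal (std_normal_density t))"
    by (auto simp: fun_eq_iff std_normal_density_def ennreal_mult'[symmetric])
  moreover have "(\<integral>\<^sup>+t. ennreal (std_normal_density t) \<partial>lborel) = 1"
    by (subst nn_integral_eq_integral) auto
  ultimately show ?thesis
    by (simp add: nn_integral_cmult)
qed

lemma nn_integral_exp_norm_sq:
  fixes c :: "'a::euclidean_space"
  shows "(\<integral>\<^sup>+x. ennreal (exp (- ((norm (x - c))\<^sup>2 / 2))) \<partial>lborel)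
       = ennreal (sqrt (2 * pi) ^ DIM('a))"
proof -
  have exp_norm: "exp (- ((norm x)\<^sup>2 / 2)) = (\<Prod>b\<in>Basis. exp (- ((x \<bullet> b)\<^sup>2 / 2)))" for x :: 'a
  proof -
    have "(norm x)\<^sup>2 = (\<Sum>b\<in>Basis. (x \<bullet> b)\<^sup>2)"
      unfolding power2_norm_eq_inner by (subst euclidean_inner) (simp add: power2_eq_square)
    then show ?thesis
      by (simp add: exp_sum[symmetric] sum_divide_distrib[symmetric] sum_negf)
  qed
  have "(\<integral>\<^sup>+x. ennreal (exp (- ((norm (x - c))\<^sup>2 / 2))) \<partial>lborel)
      = (\<integral>\<^sup>+x. ennreal (exp (- ((norm x)\<^sup>2 / 2))) \<partial>distr lborel borel ((+) (- c)))"
    by (simp add: nn_integral_distr)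
  also have "\<dots> = (\<integral>\<^sup>+x. ennreal (exp (- ((norm (x::'a))\<^sup>2 / 2))) \<partial>lborel)"
    by (simp only: lborel_distr_plus)
  also have "\<dots>
      = (\<integral>\<^sup>+x. (\<Prod>b\<in>Basis. ennreal (exp (- ((x \<bullet> b)\<^sup>2 / 2)))) \<partial>(lborel :: 'a measure))"
    by (intro nn_integral_cong) (simp add: exp_norm prod_ennreal)
  also have "\<dots> = (\<Prod>b\<in>(Basis::'a set). \<integral>\<^sup>+t. ennreal (exp (- (t\<^sup>2 / 2))) \<partial>lborel)"
    by (rule nn_integral_lborel_prod) auto
  finally show ?thesis
    by (simp only: nn_integral_exp_neg_sq_half prod_constant) (simp add: ennreal_power)
qed

lemma nn_integral_exp_norm_sq_matrix:
  fixes B :: "real^'n::finite^'m::finite"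
  assumes "inj ((*v) B)"
  shows "(\<integral>\<^sup>+x. ennreal (exp (- ((norm (B *v (x - c)))\<^sup>2 / 2))) \<partial>lborel)
       = ennreal (sqrt (2 * pi) ^ CARD('n) / sqrt (det (transpose B ** B)))"
proof -
  obtain A :: "real^'n^'n" where A: "det A \<noteq> 0" "\<And>x. norm (A *v x) = norm (B *v x)"
    and gram: "transpose A ** A = transpose B ** B"
    using gram_matrix_square_factor[OF assms] by metis
  let ?I = "\<integral>\<^sup>+x. ennreal (exp (- ((norm (B *v (x - c)))\<^sup>2 / 2))) \<partial>lborel"
  have "inj ((*v) A)"
    using A(1) det_nz_iff_inj[of "(*v) A"] by (simp add: matrix_of_matrix_vector_mul)
  then have "?I * ennreal \<bar>det A\<bar>
      = (\<integral>\<^sup>+y. ennreal (exp (- ((norm (y - A *v c))\<^sup>2 / 2))) \<partial>lborel)"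
    using nn_integral_change_of_variables_linear_cart
      [of "(*v) A" "\<lambda>y. ennreal (exp (- ((norm (y - A *v c))\<^sup>2 / 2)))"]
    by (simp add: matrix_of_matrix_vector_mul A(2) flip: matrix_vector_mult_diff_distrib)
  also have "\<dots> = ennreal (sqrt (2 * pi) ^ CARD('n))"
    using nn_integral_exp_norm_sq[of "A *v c"] by simp
  finally have scaled: "?I * ennreal \<bar>det A\<bar> = ennreal (sqrt (2 * pi) ^ CARD('n))" .
  have "?I = ?I * ennreal \<bar>det A\<bar> / ennreal \<bar>det A\<bar>"
    using A(1) by (simp add: ennreal_mult_divide_eq)
  also have "\<dots> = ennreal (sqrt (2 * pi) ^ CARD('n) / \<bar>det A\<bar>)"
    using A(1) by (simp only: scaled) (simp add: divide_ennreal)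
  also have "\<bar>det A\<bar> = sqrt (det (transpose B ** B))"
    by (simp flip: gram add: det_mul det_transpose)
  finally show ?thesis .
qed

lemma mvn_density_matrix_inv:
  fixes P :: "real^'n::finite^'n"
  assumes "0 < det P"
  shows "mvn_density m (matrix_inv P) x
       = exp (- ((x - m) \<bullet> (P *v (x - m))) / 2) / (sqrt (2 * pi) ^ CARD('n) / sqrt (det P))"
proof -
  have "invertible P"
    using assms invertible_det_nz by force
  moreover have "sqrt ((2 * pi) ^ CARD('n) * inverse (det P))
      = sqrt (2 * pi) ^ CARD('n) / sqrt (det P)"
    by (simp add: real_sqrt_mult real_sqrt_power real_sqrt_inverse divide_inverse power_mult_distrib)
  ultimately show ?thesis
    by (simp only: mvn_density_def matrix_inv_matrix_inv det_matrix_inv)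
qed

lemma ennreal_exp_norm_sq_eq_mvn_density:
  fixes B :: "real^'n::finite^'m::finite" and w :: "real^'m"
  assumes inj: "inj ((*v) B)"
  defines "P \<equiv> transpose B ** B"
  shows "ennreal (exp (- ((norm (B *v x - w))\<^sup>2 / 2)))
       = (\<integral>\<^sup>+y. ennreal (exp (- ((norm (B *v y - w))\<^sup>2 / 2))) \<partial>lborel)
         * ennreal (mvn_density (matrix_inv P *v (transpose B *v w)) (matrix_inv P) x)"
proof -
  define m where "m = matrix_inv P *v (transpose B *v w)"
  define r where "r = (norm (B *v m - w))\<^sup>2"
  define G where "G = sqrt (2 * pi) ^ CARD('n) / sqrt (det P)"
  have det_P: "0 < det P"
    unfolding P_def using inj by (rule det_gram_pos)
  then have "0 < G"
    by (simp add: G_def)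
  have "invertible P"
    using det_P invertible_det_nz by force
  then have centred: "exp (- ((norm (B *v y - w))\<^sup>2 / 2))
      = exp (- (r / 2)) * exp (- ((norm (B *v (y - m)))\<^sup>2 / 2))" for y
    using norm_sq_least_squares_decomp[where B=B and w=w and x=y]
    by (simp add: P_def m_def r_def add_divide_distrib flip: exp_add)
  have [measurable]: "(*v) B \<in> borel_measurable borel"
    by (simp add: borel_measurable_linear)
  have "(\<integral>\<^sup>+y. ennreal (exp (- ((norm (B *v y - w))\<^sup>2 / 2))) \<partial>lborel)
      = (\<integral>\<^sup>+y. ennreal (exp (- (r / 2))) * ennreal (exp (- ((norm (B *v (y - m)))\<^sup>2 / 2)))
           \<partial>lborel)"
    by (subst centred) (simp add: ennreal_mult)
  also have "\<dots> = ennreal (exp (- (r / 2))) * ennreal G"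
    by (simp add: nn_integral_cmult nn_integral_exp_norm_sq_matrix[OF inj] G_def P_def)
  finally have integral: "(\<integral>\<^sup>+y. ennreal (exp (- ((norm (B *v y - w))\<^sup>2 / 2))) \<partial>lborel)
      = ennreal (exp (- (r / 2))) * ennreal G" .
  have "(x - m) \<bullet> (P *v (x - m)) = (norm (B *v (x - m)))\<^sup>2"
    by (simp add: P_def power2_norm_eq_inner inner_matrix_vector_mult_transpose
        matrix_vector_mul_assoc del: transpose_matrix_vector)
  then have mvn: "mvn_density m (matrix_inv P) x = exp (- ((norm (B *v (x - m)))\<^sup>2 / 2)) / G"
    using mvn_density_matrix_inv[OF det_P] by (simp add: G_def)
  show ?thesis
    unfolding integral m_def[symmetric] mvn
    using \<open>0 < G\<close> by (simp add: centred ennreal_mult[symmetric])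
qed

section \<open>Gaussian latent machines\<close>

definition glm_whitened_K ::
    "real^'n^'m \<Rightarrow> ('m \<Rightarrow> 'z \<Rightarrow> real) \<Rightarrow> ('m \<Rightarrow> 'z) \<Rightarrow> real^'n^'m" where
  "glm_whitened_K K s2 z = (\<chi> i j. K $ i $ j / sqrt (s2 i (z i)))"

definition glm_whitened_mu0 ::
    "('m \<Rightarrow> 'z \<Rightarrow> real) \<Rightarrow> ('m \<Rightarrow> 'z \<Rightarrow> real) \<Rightarrow> ('m \<Rightarrow> 'z) \<Rightarrow> real^'m" where
  "glm_whitened_mu0 mu s2 z = (\<chi> i. mu i (z i) / sqrt (s2 i (z i)))"

context
  fixes K :: "real^'n::finite^'m::finite" and mu s2 f :: "'m \<Rightarrow> 'z \<Rightarrow> real"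
    and z :: "'m \<Rightarrow> 'z"
  assumes s2_pos: "\<And>i. 0 < s2 i (z i)"
begin

lemma matrix_inv_glm_Sigma0:
  "matrix_inv (glm_Sigma0 s2 z) = (\<chi> i j. if i = j then inverse (s2 i (z i)) else 0)"
  unfolding glm_Sigma0_def by (intro matrix_inv_diagonal) (metis s2_pos less_irrefl)

lemma gram_glm_whitened_K:
  "transpose (glm_whitened_K K s2 z) ** glm_whitened_K K s2 z
     = transpose K ** matrix_inv (glm_Sigma0 s2 z) ** K"
  using s2_pos
  by (simp add: matrix_inv_glm_Sigma0 glm_whitened_K_def vec_eq_iff matrix_matrix_mult_def transpose_def
      if_distrib[of "\<lambda>a. _ * a"] real_sqrt_mult_self abs_of_pos[OF s2_pos] divide_inverse mult_ac
      flip: inverse_mult_distrib cong: if_cong)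

lemma transpose_glm_whitened_K_mult_mu0:
  "transpose (glm_whitened_K K s2 z) *v glm_whitened_mu0 mu s2 z
     = transpose K *v (matrix_inv (glm_Sigma0 s2 z) *v glm_mu0 mu z)"
  using s2_pos
  by (simp add: matrix_inv_glm_Sigma0 glm_whitened_K_def glm_whitened_mu0_def glm_mu0_def vec_eq_iff
      matrix_vector_mult_def transpose_def if_distrib[of "\<lambda>a. _ * a"] real_sqrt_mult_self
      abs_of_pos[OF s2_pos] divide_inverse mult_ac flip: inverse_mult_distrib cong: if_cong)

lemma glm_Sigma_eq_whitened:
  "glm_Sigma K s2 z = matrix_inv (transpose (glm_whitened_K K s2 z) ** glm_whitened_K K s2 z)"
  by (simp add: glm_Sigma_def gram_glm_whitened_K)

lemma glm_mu_eq_whitened: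
  "glm_mu K mu s2 z = matrix_inv (transpose (glm_whitened_K K s2 z) ** glm_whitened_K K s2 z)
      *v (transpose (glm_whitened_K K s2 z) *v glm_whitened_mu0 mu s2 z)"
  by (simp only: glm_mu_def glm_Sigma_eq_whitened transpose_glm_whitened_K_mult_mu0)

lemma inj_glm_whitened_K:
  assumes "inj ((*v) K)"
  shows "inj ((*v) (glm_whitened_K K s2 z))"
proof (rule injI)
  fix x y
  assume "glm_whitened_K K s2 z *v x = glm_whitened_K K s2 z *v y"
  then have "(K *v x) $ i = (K *v y) $ i" for i
    using s2_pos[of i]
    by (auto simp: vec_eq_iff glm_whitened_K_def matrix_vector_mult_def sum_divide_distrib[symmetric]
        dest: spec[of _ i])
  then have "K *v x = K *v y"
    by (simp add: vec_eq_iff)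
  then show "x = y"
    by (rule injD[OF assms])
qed

lemma glm_unnorm_eq_exp:
  "glm_unnorm K mu s2 f x z
     = (\<Prod>i\<in>UNIV. f i (z i) / sqrt (2 * pi * s2 i (z i)))
       * exp (- ((norm (glm_whitened_K K s2 z *v x - glm_whitened_mu0 mu s2 z))\<^sup>2 / 2))"
proof -
  have residual: "(glm_whitened_K K s2 z *v x - glm_whitened_mu0 mu s2 z) $ i
      = ((K *v x) $ i - mu i (z i)) / sqrt (s2 i (z i))" for i
    by (simp add: glm_whitened_K_def glm_whitened_mu0_def matrix_vector_mult_def sum_divide_distrib
        diff_divide_distrib)
  have "(norm v)\<^sup>2 = (\<Sum>i\<in>UNIV. (v $ i)\<^sup>2)" for v :: "real^'m"
    unfolding power2_norm_eq_inner inner_vec_def inner_real_def by (simp add: power2_eq_square)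
  then have norm_residual: "(norm (glm_whitened_K K s2 z *v x - glm_whitened_mu0 mu s2 z))\<^sup>2
      = (\<Sum>i\<in>UNIV. ((K *v x) $ i - mu i (z i))\<^sup>2 / s2 i (z i))"
    by (simp only: residual power_divide real_sqrt_pow2[OF less_imp_le[OF s2_pos]])
  have factor: "normal_density (mu i (z i)) (sqrt (s2 i (z i))) ((K *v x) $ i) * f i (z i)
      = f i (z i) / sqrt (2 * pi * s2 i (z i))
        * exp (- (((K *v x) $ i - mu i (z i))\<^sup>2 / s2 i (z i) / 2))" for i
    using s2_pos[of i] by (simp add: normal_density_def field_simps)
  have "glm_unnorm K mu s2 f x z
      = (\<Prod>i\<in>UNIV. f i (z i) / sqrt (2 * pi * s2 i (z i))
           * exp (- (((K *v x) $ i - mu i (z i))\<^sup>2 / s2 i (z i) / 2)))"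
    unfolding glm_unnorm_def by (simp only: factor)
  also have "\<dots> = (\<Prod>i\<in>UNIV. f i (z i) / sqrt (2 * pi * s2 i (z i)))
      * (\<Prod>i\<in>UNIV. exp (- (((K *v x) $ i - mu i (z i))\<^sup>2 / s2 i (z i) / 2)))"
    by (rule prod.distrib)
  also have "(\<Prod>i\<in>UNIV. exp (- (((K *v x) $ i - mu i (z i))\<^sup>2 / s2 i (z i) / 2)))
      = exp (- ((\<Sum>i\<in>UNIV. ((K *v x) $ i - mu i (z i))\<^sup>2 / s2 i (z i)) / 2))"
    by (simp add: exp_sum[symmetric] sum_negf sum_divide_distrib)
  finally show ?thesis
    by (simp only: norm_residual)
qed

end

(* No hypothesis on the normalising constant is needed: if enn2real sends it to 0, both sides vanish. *)
lemma glm_joint_eq_marg_Z_mult_mvn_density: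
  fixes K :: "real^'n::finite^'m::finite"
  assumes inj: "inj ((*v) K)" and s2_pos: "\<And>i. 0 < s2 i (z i)"
    and f_nonneg: "\<And>i. 0 \<le> f i (z i)"
  shows "ennreal (glm_joint M K mu s2 f x z)
       = glm_marg_Z M K mu s2 f z * ennreal (mvn_density (glm_mu K mu s2 z) (glm_Sigma K s2 z) x)"
proof -
  let ?B = "glm_whitened_K K s2 z" and ?w = "glm_whitened_mu0 mu s2 z"
  define c where
    "c = (\<Prod>i\<in>UNIV. f i (z i) / sqrt (2 * pi * s2 i (z i))) / enn2real (glm_const M K mu s2 f)"
  have "0 \<le> c"
    unfolding c_def using f_nonneg s2_pos by (simp add: prod_nonneg less_imp_le)
  have joint: "glm_joint M K mu s2 f y z = c * exp (- ((norm (?B *v y - ?w))\<^sup>2 / 2))" for y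
    by (simp add: glm_joint_def glm_unnorm_eq_exp[where ?s2.0=s2 and z=z, OF s2_pos] c_def)
  have [measurable]: "(*v) ?B \<in> borel_measurable borel"
    by (simp add: borel_measurable_linear)
  have "ennreal (glm_joint M K mu s2 f x z)
      = ennreal c * ennreal (exp (- ((norm (?B *v x - ?w))\<^sup>2 / 2)))"
    using \<open>0 \<le> c\<close> by (simp add: joint ennreal_mult)
  also have "\<dots> = ennreal c * (\<integral>\<^sup>+y. ennreal (exp (- ((norm (?B *v y - ?w))\<^sup>2 / 2))) \<partial>lborel)
      * ennreal (mvn_density (glm_mu K mu s2 z) (glm_Sigma K s2 z) x)"
    using ennreal_exp_norm_sq_eq_mvn_density
      [OF inj_glm_whitened_K[where ?s2.0=s2 and z=z, OF s2_pos inj], of x ?w]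
    by (simp add: glm_mu_eq_whitened[where ?s2.0=s2 and z=z, OF s2_pos]
        glm_Sigma_eq_whitened[where ?s2.0=s2 and z=z, OF s2_pos] mult.assoc)
  also have "ennreal c * (\<integral>\<^sup>+y. ennreal (exp (- ((norm (?B *v y - ?w))\<^sup>2 / 2))) \<partial>lborel)
      = glm_marg_Z M K mu s2 f z"
    using \<open>0 \<le> c\<close> by (simp add: glm_marg_Z_def joint ennreal_mult nn_integral_cmult)
  finally show ?thesis .
qed

(* The densities agree pointwise in z; of the hypotheses only rankK, f_nonneg and s2_pos are needed. *)
theorem corollary3p12:
  fixes K :: "real^'n::finite^'m::finite"
    and M :: "'m \<Rightarrow> 'z measure"
    and f mu s2 :: "'m \<Rightarrow> 'z \<Rightarrow> real"
  assumes dims: "CARD('m) \<ge> CARD('n)"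
    and rankK: "rank K = CARD('n)"
    and sf: "\<And>i. sigma_finite_measure (M i)"
    and f_meas: "\<And>i. f i \<in> borel_measurable (M i)"
    and f_nonneg: "\<And>i z. z \<in> space (M i) \<Longrightarrow> f i z \<ge> 0"
    and f_int: "\<And>i. (\<integral>\<^sup>+ z. ennreal (f i z) \<partial>M i) = 1"
    and mu_meas: "\<And>i. mu i \<in> borel_measurable (M i)"
    and s2_meas: "\<And>i. s2 i \<in> borel_measurable (M i)"
    and s2_pos: "\<And>i z. z \<in> space (M i) \<Longrightarrow> s2 i z > 0"
    and C_pos: "glm_const M K mu s2 f \<noteq> 0"
    and C_fin: "glm_const M K mu s2 f \<noteq> \<infinity>"
  shows "\<forall>x. glm_marg_X M K mu s2 f x =
           (\<integral>\<^sup>+ z. glm_marg_Z M K mu s2 f z * ennreal (mvn_density (glm_mu K mu s2 z) (glm_Sigma K s2 z) x)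
              \<partial>(PiM UNIV M))"
proof -
  have inj: "inj ((*v) K)"
    using rankK full_rank_injective by blast
  have "ennreal (glm_joint M K mu s2 f x z)
      = glm_marg_Z M K mu s2 f z * ennreal (mvn_density (glm_mu K mu s2 z) (glm_Sigma K s2 z) x)"
    if "z \<in> space (PiM UNIV M)" for x z
  proof -
    from that have "z i \<in> space (M i)" for i
      by (auto simp: space_PiM)
    then show ?thesis
      using glm_joint_eq_marg_Z_mult_mvn_density[OF inj] s2_pos f_nonneg by blast
  qed
  then show ?thesis
    unfolding glm_marg_X_def by (auto intro: nn_integral_cong)
qed

end
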